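(* Let $\mathcal{X}$ be an extension-closed subcategory of $\mathcal{C}$ and $\mathcal{W}$ a cogenerator for $\mathcal{X}$. Let $n\ge1$ and $C\in\mathcal{C}$. Then $C\in\widehat{\mathcal{X}}_n$ if and only if there exists an $\mathbb{E}$-triangle sequence $W_n\to\cdots\to W_2\to W_1\to X_0\to C$ with $X_0\in\mathcal{X}$ and $W_i\in\mathcal{W}$ for $1\le i\le n$, i.e. there exist $\mathbb{E}$-triangles $K_1\to X_0\to C\dashrightarrow$ and $K_{i+1}\to W_i\to K_i\dashrightarrow$ for $1\le i\le n-1$, with $K_n=W_n$.
   Context: $\mathcal{C}=(\mathcal{C},\mathbb{E},\mathfrak{s})$ is an extriangulated category (in the sense of Nakaoka–Palu) with enough projectives and enough injectives; a conflation realizing $\delta\in\mathbb{E}(C,A)$ is written as an $\mathbb{E}$-triangle $A\to B\to C\dashrightarrow$. All subcategories are full, additive, closed under isomorphisms and direct summands. $\mathcal{X}$ is extension-closed if for every $\mathbb{E}$-triangle $A\to B\to C\dashrightarrow$ with $A,C\in\mathcal{X}$ one has $B\in\mathcal{X}$. $\mathcal{W}$ is a cogenerator for $\mathcal{X}$ if $\mathcal{W}\subseteq\mathcal{X}$ and for each $X\in\mathcal{X}$ there is an $\mathbb{E}$-triangle $X\to W\to X'\dashrightarrow$ with $W\in\mathcal{W}$, $X'\in\mathcal{X}$. For $n\ge0$, $\widehat{\mathcal{X}}_n$ is the subcategory of objects $C$ for which there exist $\mathbb{E}$-triangles $K_{i+1}\to X_i\to K_i\dashrightarrow$ ($0\le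 i\le n-1$) with $K_0=C$, all $X_i\in\mathcal{X}$ and $K_n\in\mathcal{X}$. *)

theory Defs
  imports Main "HOL-Algebra.Group"
begin

text \<open>All operations carry their objects explicitly:
  cmp A B C g f is the composite g o f of f : A -> B and g : B -> C;
  madd A B / mzero A B are addition / zero in Hom A B;
  Ext C A is the abelian group E(C,A) with eadd C A / ezero C A;
  epush C A A' a d = a_* d  for a : A -> A' and d in E(C,A);
  epull C' C A c d = c^* d  for c : C' -> C and d in E(C,A);
  rlz A B C x y d means that the sequence A -x-> B -y-> C belongs to the
  class s(d), i.e. A -x-> B -y-> C -d-> is an E-triangle.\<close>

record ('o,'m,'e) extri =
  Ob    :: "'o set"
  Hom   :: "'o \<Rightarrow> 'o \<Rightarrow> 'm set"
  cmp   :: "'o \<Rightarrow> 'o \<Rightarrow> 'o \<Rightarrow> 'm \<Rightarrow> 'm \<Rightarrow> 'm"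
  idm   :: "'o \<Rightarrow> 'm"
  madd  :: "'o \<Rightarrow> 'o \<Rightarrow> 'm \<Rightarrow> 'm \<Rightarrow> 'm"
  mzero :: "'o \<Rightarrow> 'o \<Rightarrow> 'm"
  Ext   :: "'o \<Rightarrow> 'o \<Rightarrow> 'e set"
  eadd  :: "'o \<Rightarrow> 'o \<Rightarrow> 'e \<Rightarrow> 'e \<Rightarrow> 'e"
  ezero :: "'o \<Rightarrow> 'o \<Rightarrow> 'e"
  epush :: "'o \<Rightarrow> 'o \<Rightarrow> 'o \<Rightarrow> 'm \<Rightarrow> 'e \<Rightarrow> 'e"
  epull :: "'o \<Rightarrow> 'o \<Rightarrow> 'o \<Rightarrow> 'm \<Rightarrow> 'e \<Rightarrow> 'e"
  rlz   :: "'o \<Rightarrow> 'o \<Rightarrow> 'o \<Rightarrow> 'm \<Rightarrow> 'm \<Rightarrow> 'e \<Rightarrow> bool"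

definition hom_group :: "('o,'m,'e) extri \<Rightarrow> 'o \<Rightarrow> 'o \<Rightarrow> 'm monoid" where
  "hom_group K A B = \<lparr>carrier = Hom K A B, mult = madd K A B, one = mzero K A B\<rparr>"

definition ext_group :: "('o,'m,'e) extri \<Rightarrow> 'o \<Rightarrow> 'o \<Rightarrow> 'e monoid" where
  "ext_group K C A = \<lparr>carrier = Ext K C A, mult = eadd K C A, one = ezero K C A\<rparr>"

definition isom :: "('o,'m,'e) extri \<Rightarrow> 'o \<Rightarrow> 'o \<Rightarrow> 'm \<Rightarrow> bool" where
  "isom K A B f \<longleftrightarrow> f \<in> Hom K A B \<and>
     (\<exists>g\<in>Hom K B A. cmp K A B A g f = idm K A \<and> cmp K B A B f g = idm K B)"

definition biprod :: "('o,'m,'e) extri \<Rightarrow> 'o \<Rightarrow> 'o \<Rightarrow> 'o \<Rightarrow> 'm \<Rightarrow> 'm \<Rightarrow> 'm \<Rightarrow> 'm \<Rightarrow> bool" where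
  "biprod K A C S i1 i2 p1 p2 \<longleftrightarrow> A \<in> Ob K \<and> C \<in> Ob K \<and> S \<in> Ob K \<and>
     i1 \<in> Hom K A S \<and> i2 \<in> Hom K C S \<and> p1 \<in> Hom K S A \<and> p2 \<in> Hom K S C \<and>
     cmp K A S A p1 i1 = idm K A \<and> cmp K C S C p2 i2 = idm K C \<and>
     cmp K C S A p1 i2 = mzero K C A \<and> cmp K A S C p2 i1 = mzero K A C \<and>
     madd K S S (cmp K S A S i1 p1) (cmp K S C S i2 p2) = idm K S"

definition additive_cat :: "('o,'m,'e) extri \<Rightarrow> bool" where
  "additive_cat K \<longleftrightarrow>
     (\<forall>A\<in>Ob K. \<forall>B\<in>Ob K. \<forall>C\<in>Ob K. \<forall>f\<in>Hom K A B. \<forall>g\<in>Hom K B C.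
        cmp K A B C g f \<in> Hom K A C) \<and>
     (\<forall>A\<in>Ob K. idm K A \<in> Hom K A A) \<and>
     (\<forall>A\<in>Ob K. \<forall>B\<in>Ob K. \<forall>f\<in>Hom K A B.
        cmp K A A B f (idm K A) = f \<and> cmp K A B B (idm K B) f = f) \<and>
     (\<forall>A\<in>Ob K. \<forall>B\<in>Ob K. \<forall>C\<in>Ob K. \<forall>D\<in>Ob K.
        \<forall>f\<in>Hom K A B. \<forall>g\<in>Hom K B C. \<forall>h\<in>Hom K C D.
        cmp K A C D h (cmp K A B C g f) = cmp K A B D (cmp K B C D h g) f) \<and>
     (\<forall>A\<in>Ob K. \<forall>B\<in>Ob K. comm_group (hom_group K A B)) \<and>
     (\<forall>A\<in>Ob K. \<forall>B\<in>Ob K. \<forall>C\<in>Ob K. \<forall>f\<in>Hom K A B. \<forall>f'\<in>Hom K A B. \<forall>g\<in>Hom K B C.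
        cmp K A B C g (madd K A B f f') = madd K A C (cmp K A B C g f) (cmp K A B C g f')) \<and>
     (\<forall>A\<in>Ob K. \<forall>B\<in>Ob K. \<forall>C\<in>Ob K. \<forall>f\<in>Hom K A B. \<forall>g\<in>Hom K B C. \<forall>g'\<in>Hom K B C.
        cmp K A B C (madd K B C g g') f = madd K A C (cmp K A B C g f) (cmp K A B C g' f)) \<and>
     (\<exists>Z\<in>Ob K. idm K Z = mzero K Z Z) \<and>
     (\<forall>A\<in>Ob K. \<forall>C\<in>Ob K. \<exists>S i1 i2 p1 p2. biprod K A C S i1 i2 p1 p2)"

definition biadditive_E :: "('o,'m,'e) extri \<Rightarrow> bool" where
  "biadditive_E K \<longleftrightarrow>
     (\<forall>C\<in>Ob K. \<forall>A\<in>Ob K. comm_group (ext_group K C A)) \<and>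
     (\<forall>C\<in>Ob K. \<forall>A\<in>Ob K. \<forall>A'\<in>Ob K. \<forall>a\<in>Hom K A A'. \<forall>d\<in>Ext K C A.
        epush K C A A' a d \<in> Ext K C A') \<and>
     (\<forall>C'\<in>Ob K. \<forall>C\<in>Ob K. \<forall>A\<in>Ob K. \<forall>c\<in>Hom K C' C. \<forall>d\<in>Ext K C A.
        epull K C' C A c d \<in> Ext K C' A) \<and>
     (\<forall>C\<in>Ob K. \<forall>A\<in>Ob K. \<forall>d\<in>Ext K C A.
        epush K C A A (idm K A) d = d \<and> epull K C C A (idm K C) d = d) \<and>
     (\<forall>C\<in>Ob K. \<forall>A\<in>Ob K. \<forall>A'\<in>Ob K. \<forall>A''\<in>Ob K. \<forall>a\<in>Hom K A A'. \<forall>a'\<in>Hom K A' A''.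
        \<forall>d\<in>Ext K C A.
        epush K C A' A'' a' (epush K C A A' a d) = epush K C A A'' (cmp K A A' A'' a' a) d) \<and>
     (\<forall>C''\<in>Ob K. \<forall>C'\<in>Ob K. \<forall>C\<in>Ob K. \<forall>A\<in>Ob K. \<forall>c\<in>Hom K C' C. \<forall>c'\<in>Hom K C'' C'.
        \<forall>d\<in>Ext K C A.
        epull K C'' C' A c' (epull K C' C A c d) = epull K C'' C A (cmp K C'' C' C c c') d) \<and>
     (\<forall>C'\<in>Ob K. \<forall>C\<in>Ob K. \<forall>A\<in>Ob K. \<forall>A'\<in>Ob K. \<forall>c\<in>Hom K C' C. \<forall>a\<in>Hom K A A'.
        \<forall>d\<in>Ext K C A.
        epull K C' C A' c (epush K C A A' a d) = epush K C' A A' a (epull K C' C A c d)) \<and>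
     (\<forall>C\<in>Ob K. \<forall>A\<in>Ob K. \<forall>A'\<in>Ob K. \<forall>a\<in>Hom K A A'. \<forall>d\<in>Ext K C A. \<forall>d'\<in>Ext K C A.
        epush K C A A' a (eadd K C A d d') = eadd K C A' (epush K C A A' a d) (epush K C A A' a d')) \<and>
     (\<forall>C'\<in>Ob K. \<forall>C\<in>Ob K. \<forall>A\<in>Ob K. \<forall>c\<in>Hom K C' C. \<forall>d\<in>Ext K C A. \<forall>d'\<in>Ext K C A.
        epull K C' C A c (eadd K C A d d') = eadd K C' A (epull K C' C A c d) (epull K C' C A c d')) \<and>
     (\<forall>C\<in>Ob K. \<forall>A\<in>Ob K. \<forall>A'\<in>Ob K. \<forall>a\<in>Hom K A A'. \<forall>b\<in>Hom K A A'. \<forall>d\<in>Ext K C A.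
        epush K C A A' (madd K A A' a b) d = eadd K C A' (epush K C A A' a d) (epush K C A A' b d)) \<and>
     (\<forall>C'\<in>Ob K. \<forall>C\<in>Ob K. \<forall>A\<in>Ob K. \<forall>c\<in>Hom K C' C. \<forall>e\<in>Hom K C' C. \<forall>d\<in>Ext K C A.
        epull K C' C A (madd K C' C c e) d = eadd K C' A (epull K C' C A c d) (epull K C' C A e d))"

definition seq_equiv :: "('o,'m,'e) extri \<Rightarrow> 'o \<Rightarrow> 'o \<Rightarrow> 'o \<Rightarrow> 'o \<Rightarrow> 'm \<Rightarrow> 'm \<Rightarrow> 'm \<Rightarrow> 'm \<Rightarrow> bool" where
  "seq_equiv K A B B' C x y x' y' \<longleftrightarrow>
     (\<exists>b. isom K B B' b \<and> cmp K A B B' b x = x' \<and> cmp K B B' C y' b = y)"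

text \<open>s is a realization of E: each s(d) is one equivalence class of sequences,
  compatible with morphisms of extensions (Def. 2.9).\<close>
definition realization :: "('o,'m,'e) extri \<Rightarrow> bool" where
  "realization K \<longleftrightarrow>
     (\<forall>A B C x y d. rlz K A B C x y d \<longrightarrow>
        A \<in> Ob K \<and> B \<in> Ob K \<and> C \<in> Ob K \<and> x \<in> Hom K A B \<and> y \<in> Hom K B C \<and> d \<in> Ext K C A) \<and>
     (\<forall>A\<in>Ob K. \<forall>C\<in>Ob K. \<forall>d\<in>Ext K C A. \<exists>B x y. rlz K A B C x y d) \<and>
     (\<forall>A B C x y d B' x' y'. rlz K A B C x y d \<longrightarrow>
        (rlz K A B' C x' y' d \<longleftrightarrow>
          (B' \<in> Ob K \<and> x' \<in> Hom K A B' \<and> y' \<in> Hom K B' C \<and> seq_equiv K A B B' C x y x' y'))) \<and>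
     (\<forall>A B C x y d A' B' C' x' y' d' a c.
        rlz K A B C x y d \<and> rlz K A' B' C' x' y' d' \<and> a \<in> Hom K A A' \<and> c \<in> Hom K C C' \<and>
        epush K C A A' a d = epull K C C' A' c d' \<longrightarrow>
        (\<exists>b\<in>Hom K B B'. cmp K A B B' b x = cmp K A A' B' x' a \<and>
                          cmp K B B' C' y' b = cmp K B C C' c y))"

definition additive_realization :: "('o,'m,'e) extri \<Rightarrow> bool" where
  "additive_realization K \<longleftrightarrow>
     (\<forall>A C S i1 i2 p1 p2. biprod K A C S i1 i2 p1 p2 \<longrightarrow> rlz K A S C i1 p2 (ezero K C A)) \<and>
     (\<forall>A B C x y d A' B' C' x' y' d' SA ia ia' pa pa' SB ib ib' pb pb' SC ic ic' pc pc'.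
        rlz K A B C x y d \<and> rlz K A' B' C' x' y' d' \<and>
        biprod K A A' SA ia ia' pa pa' \<and> biprod K B B' SB ib ib' pb pb' \<and>
        biprod K C C' SC ic ic' pc pc' \<longrightarrow>
        rlz K SA SB SC
          (madd K SA SB (cmp K SA A SB (cmp K A B SB ib x) pa) (cmp K SA A' SB (cmp K A' B' SB ib' x') pa'))
          (madd K SB SC (cmp K SB B SC (cmp K B C SC ic y) pb) (cmp K SB B' SC (cmp K B' C' SC ic' y') pb'))
          (eadd K SC SA (epush K SC A SA ia (epull K SC C A pc d))
                        (epush K SC A' SA ia' (epull K SC C' A' pc' d'))))"

definition ET3 :: "('o,'m,'e) extri \<Rightarrow> bool" where
  "ET3 K \<longleftrightarrow>
     (\<forall>A B C x y d A' B' C' x' y' d' a b.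
        rlz K A B C x y d \<and> rlz K A' B' C' x' y' d' \<and> a \<in> Hom K A A' \<and> b \<in> Hom K B B' \<and>
        cmp K A B B' b x = cmp K A A' B' x' a \<longrightarrow>
        (\<exists>c\<in>Hom K C C'. cmp K B C C' c y = cmp K B B' C' y' b \<and>
                          epush K C A A' a d = epull K C C' A' c d'))"

definition ET3op :: "('o,'m,'e) extri \<Rightarrow> bool" where
  "ET3op K \<longleftrightarrow>
     (\<forall>A B C x y d A' B' C' x' y' d' b c.
        rlz K A B C x y d \<and> rlz K A' B' C' x' y' d' \<and> b \<in> Hom K B B' \<and> c \<in> Hom K C C' \<and>
        cmp K B C C' c y = cmp K B B' C' y' b \<longrightarrow>
        (\<exists>a\<in>Hom K A A'. cmp K A B B' b x = cmp K A A' B' x' a \<and>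
                          epush K C A A' a d = epull K C C' A' c d'))"

definition ET4 :: "('o,'m,'e) extri \<Rightarrow> bool" where
  "ET4 K \<longleftrightarrow>
     (\<forall>A B C D F f f' g g' d d'.
        rlz K A B D f f' d \<and> rlz K B C F g g' d' \<longrightarrow>
        (\<exists>E h' e1 e2 d''. E \<in> Ob K \<and> h' \<in> Hom K C E \<and> e1 \<in> Hom K D E \<and> e2 \<in> Hom K E F \<and>
           d'' \<in> Ext K E A \<and>
           rlz K A C E (cmp K A B C g f) h' d'' \<and>
           cmp K B D E e1 f' = cmp K B C E h' g \<and>
           cmp K C E F e2 h' = g' \<and>
           rlz K D E F e1 e2 (epush K F B D f' d') \<and>
           epull K D E A e1 d'' = d \<and>
           epush K E A B f d'' = epull K E F B e2 d'))"

definition ET4op :: "('o,'m,'e) extri \<Rightarrow> bool" where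
  "ET4op K \<longleftrightarrow>
     (\<forall>A B C D F f f' g g' d d'.
        rlz K D B A f' f d \<and> rlz K F C B g' g d' \<longrightarrow>
        (\<exists>E h' e1 e2 d''. E \<in> Ob K \<and> h' \<in> Hom K E C \<and> e1 \<in> Hom K E D \<and> e2 \<in> Hom K F E \<and>
           d'' \<in> Ext K A E \<and>
           rlz K E C A h' (cmp K C B A f g) d'' \<and>
           cmp K E D B f' e1 = cmp K E C B g h' \<and>
           cmp K F E C h' e2 = g' \<and>
           rlz K F E D e2 e1 (epull K D B F f' d') \<and>
           epush K A E D e1 d'' = d \<and>
           epull K B A E f d'' = epush K B F E e2 d'))"

definition extriangulated :: "('o,'m,'e) extri \<Rightarrow> bool" where
  "extriangulated K \<longleftrightarrow> additive_cat K \<and> biadditive_E K \<and> realization K \<and>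
     additive_realization K \<and> ET3 K \<and> ET3op K \<and> ET4 K \<and> ET4op K"

definition etri :: "('o,'m,'e) extri \<Rightarrow> 'o \<Rightarrow> 'o \<Rightarrow> 'o \<Rightarrow> bool" where
  "etri K A B C \<longleftrightarrow> (\<exists>x y d. rlz K A B C x y d)"

definition projective_obj :: "('o,'m,'e) extri \<Rightarrow> 'o \<Rightarrow> bool" where
  "projective_obj K P \<longleftrightarrow> P \<in> Ob K \<and>
     (\<forall>A B C x y d. rlz K A B C x y d \<longrightarrow>
        (\<forall>c\<in>Hom K P C. \<exists>b\<in>Hom K P B. cmp K P B C y b = c))"

definition injective_obj :: "('o,'m,'e) extri \<Rightarrow> 'o \<Rightarrow> bool" where
  "injective_obj K I \<longleftrightarrow> I \<in> Ob K \<and>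
     (\<forall>A B C x y d. rlz K A B C x y d \<longrightarrow>
        (\<forall>a\<in>Hom K A I. \<exists>b\<in>Hom K B I. cmp K A B I b x = a))"

definition enough_projectives :: "('o,'m,'e) extri \<Rightarrow> bool" where
  "enough_projectives K \<longleftrightarrow>
     (\<forall>C\<in>Ob K. \<exists>A P. etri K A P C \<and> projective_obj K P)"

definition enough_injectives :: "('o,'m,'e) extri \<Rightarrow> bool" where
  "enough_injectives K \<longleftrightarrow>
     (\<forall>A\<in>Ob K. \<exists>I C. etri K A I C \<and> injective_obj K I)"

text \<open>Full additive subcategories closed under isomorphisms and direct summands
  (identified with their object classes).\<close>
definition subcat :: "('o,'m,'e) extri \<Rightarrow> 'o set \<Rightarrow> bool" where
  "subcat K X \<longleftrightarrow> X \<subseteq> Ob K \<and>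
     (\<exists>Z\<in>X. idm K Z = mzero K Z Z) \<and>
     (\<forall>A C S i1 i2 p1 p2. biprod K A C S i1 i2 p1 p2 \<longrightarrow> (S \<in> X \<longleftrightarrow> A \<in> X \<and> C \<in> X)) \<and>
     (\<forall>A B f. A \<in> X \<and> B \<in> Ob K \<and> isom K A B f \<longrightarrow> B \<in> X)"

definition extension_closed :: "('o,'m,'e) extri \<Rightarrow> 'o set \<Rightarrow> bool" where
  "extension_closed K X \<longleftrightarrow>
     (\<forall>A B C. etri K A B C \<and> A \<in> X \<and> C \<in> X \<longrightarrow> B \<in> X)"

definition cogenerator :: "('o,'m,'e) extri \<Rightarrow> 'o set \<Rightarrow> 'o set \<Rightarrow> bool" where
  "cogenerator K W X \<longleftrightarrow> W \<subseteq> X \<and>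
     (\<forall>Y\<in>X. \<exists>V\<in>W. \<exists>Y'\<in>X. etri K Y V Y')"

definition hatX :: "('o,'m,'e) extri \<Rightarrow> 'o set \<Rightarrow> nat \<Rightarrow> 'o set" where
  "hatX K X n = {C. \<exists>Kk Xs :: nat \<Rightarrow> 'o. Kk 0 = C \<and>
       (\<forall>i<n. Xs i \<in> X \<and> etri K (Kk (Suc i)) (Xs i) (Kk i)) \<and> Kk n \<in> X}"

end

theory Submission
  imports Defs
begin

text \<open>
  By induction on \<open>n\<close>, every \<open>C \<in> hatX K X n\<close> sits in a conflation \<open>L \<rightarrow> X\<^sub>0 \<rightarrow> C\<close> with
  \<open>X\<^sub>0 \<in> X\<close> and \<open>L \<in> hatX K W (n - 1)\<close>. Given \<open>K\<^sub>1 \<rightarrow> X\<^sub>0 \<rightarrow> C\<close> with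
  \<open>K\<^sub>1 \<in> hatX K X (n - 1)\<close>, induction gives \<open>L \<rightarrow> Y \<rightarrow> K\<^sub>1\<close> with \<open>Y \<in> X\<close> and
  \<open>L \<in> hatX K W (n - 2)\<close>; the cogenerator gives \<open>Y \<rightarrow> V \<rightarrow> Y'\<close> with \<open>V \<in> W\<close>, \<open>Y' \<in> X\<close>,
  and (ET4) an object \<open>E\<close> with conflations \<open>L \<rightarrow> V \<rightarrow> E\<close> and \<open>K\<^sub>1 \<rightarrow> E \<rightarrow> Y'\<close>.
  The pushout of \<open>K\<^sub>1 \<rightarrow> X\<^sub>0\<close> and \<open>K\<^sub>1 \<rightarrow> E\<close> (Nakaoka--Palu, Prop. 3.15) is an object \<open>M\<close>
  with conflations \<open>E \<rightarrow> M \<rightarrow> C\<close> and \<open>X\<^sub>0 \<rightarrow> M \<rightarrow> Y'\<close>, so \<open>M \<in> X\<close> by extension closure,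
  while \<open>E \<in> hatX K W (n - 1)\<close>. The converse is immediate from \<open>W \<subseteq> X\<close>.
\<close>

locale extriangulated_category =
  fixes K :: "('o,'m,'e) extri"
  assumes extriangulated: "extriangulated K"
begin

lemma additive: "additive_cat K"
  and E_biadditive: "biadditive_E K"
  and realization: "realization K"
  and realization_additive: "additive_realization K"
  and ET3: "ET3 K"
  and ET4: "ET4 K"
  using extriangulated by (simp_all add: extriangulated_def)

lemma cmp_closed[simp]:
  "A \<in> Ob K \<Longrightarrow> B \<in> Ob K \<Longrightarrow> C \<in> Ob K \<Longrightarrow> f \<in> Hom K A B \<Longrightarrow> g \<in> Hom K B C \<Longrightarrow>
   cmp K A B C g f \<in> Hom K A C"
  using additive by (simp add: additive_cat_def)

lemma idm_closed[simp]: "A \<in> Ob K \<Longrightarrow> idm K A \<in> Hom K A A"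
  using additive by (simp add: additive_cat_def)

lemma cmp_idm_left[simp]:
  "A \<in> Ob K \<Longrightarrow> B \<in> Ob K \<Longrightarrow> f \<in> Hom K A B \<Longrightarrow> cmp K A B B (idm K B) f = f"
  using additive by (simp add: additive_cat_def)

lemma cmp_idm_right[simp]:
  "A \<in> Ob K \<Longrightarrow> B \<in> Ob K \<Longrightarrow> f \<in> Hom K A B \<Longrightarrow> cmp K A A B f (idm K A) = f"
  using additive by (simp add: additive_cat_def)

lemma cmp_assoc[simp]:
  "A \<in> Ob K \<Longrightarrow> B \<in> Ob K \<Longrightarrow> C \<in> Ob K \<Longrightarrow> D \<in> Ob K \<Longrightarrow>
   f \<in> Hom K A B \<Longrightarrow> g \<in> Hom K B C \<Longrightarrow> h \<in> Hom K C D \<Longrightarrow>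
   cmp K A B D (cmp K B C D h g) f = cmp K A C D h (cmp K A B C g f)"
  using additive by (simp add: additive_cat_def)

lemma cmp_assoc_subst:
  "A \<in> Ob K \<Longrightarrow> B \<in> Ob K \<Longrightarrow> C \<in> Ob K \<Longrightarrow> T \<in> Ob K \<Longrightarrow>
   k \<in> Hom K T A \<Longrightarrow> f \<in> Hom K A B \<Longrightarrow> g \<in> Hom K B C \<Longrightarrow> cmp K A B C g f = h \<Longrightarrow>
   cmp K T B C g (cmp K T A B f k) = cmp K T A C h k"
  by (metis cmp_assoc)

lemma hom_group_comm_group: "A \<in> Ob K \<Longrightarrow> B \<in> Ob K \<Longrightarrow> comm_group (hom_group K A B)"
  using additive by (simp add: additive_cat_def)

lemma cmp_madd_right:
  "A \<in> Ob K \<Longrightarrow> B \<in> Ob K \<Longrightarrow> C \<in> Ob K \<Longrightarrow> f \<in> Hom K A B \<Longrightarrow> f' \<in> Hom K A B \<Longrightarrow>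
   g \<in> Hom K B C \<Longrightarrow>
   cmp K A B C g (madd K A B f f') = madd K A C (cmp K A B C g f) (cmp K A B C g f')"
  using additive by (simp add: additive_cat_def)

lemma cmp_madd_left:
  "A \<in> Ob K \<Longrightarrow> B \<in> Ob K \<Longrightarrow> C \<in> Ob K \<Longrightarrow> f \<in> Hom K A B \<Longrightarrow> g \<in> Hom K B C \<Longrightarrow>
   g' \<in> Hom K B C \<Longrightarrow>
   cmp K A B C (madd K B C g g') f = madd K A C (cmp K A B C g f) (cmp K A B C g' f)"
  using additive by (simp add: additive_cat_def)

lemma zero_object_exists: "\<exists>Z\<in>Ob K. idm K Z = mzero K Z Z"
  using additive by (simp add: additive_cat_def)

lemma biprod_exists: "A \<in> Ob K \<Longrightarrow> C \<in> Ob K \<Longrightarrow> \<exists>S i1 i2 p1 p2. biprod K A C S i1 i2 p1 p2"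
  using additive by (simp add: additive_cat_def)

definition mneg :: "'o \<Rightarrow> 'o \<Rightarrow> 'm \<Rightarrow> 'm" where
  "mneg A B f = inv\<^bsub>hom_group K A B\<^esub> f"

context
  fixes A B assumes obs: "A \<in> Ob K" "B \<in> Ob K"
begin

interpretation hom: comm_group "hom_group K A B"
  using hom_group_comm_group obs by blast

lemmas hom_group_simps = hom_group_def[of K A B]

lemma mzero_closed[simp]: "mzero K A B \<in> Hom K A B"
  using hom.one_closed by (simp add: hom_group_simps)

lemma madd_closed[simp]: "f \<in> Hom K A B \<Longrightarrow> g \<in> Hom K A B \<Longrightarrow> madd K A B f g \<in> Hom K A B"
  using hom.m_closed by (simp add: hom_group_simps)

lemma mneg_closed[simp]: "f \<in> Hom K A B \<Longrightarrow> mneg A B f \<in> Hom K A B"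
  using hom.inv_closed by (simp add: hom_group_simps mneg_def)

lemma madd_mzero_left[simp]: "f \<in> Hom K A B \<Longrightarrow> madd K A B (mzero K A B) f = f"
  using hom.l_one by (simp add: hom_group_simps)

lemma madd_mzero_right[simp]: "f \<in> Hom K A B \<Longrightarrow> madd K A B f (mzero K A B) = f"
  using hom.r_one by (simp add: hom_group_simps)

lemma madd_assoc:
  "f \<in> Hom K A B \<Longrightarrow> g \<in> Hom K A B \<Longrightarrow> h \<in> Hom K A B \<Longrightarrow>
   madd K A B (madd K A B f g) h = madd K A B f (madd K A B g h)"
  using hom.m_assoc by (simp add: hom_group_simps)

lemma madd_commute: "f \<in> Hom K A B \<Longrightarrow> g \<in> Hom K A B \<Longrightarrow> madd K A B f g = madd K A B g f"
  using hom.m_comm by (simp add: hom_group_simps)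

lemma madd_mneg_right[simp]: "f \<in> Hom K A B \<Longrightarrow> madd K A B f (mneg A B f) = mzero K A B"
  using hom.r_inv by (simp add: hom_group_simps mneg_def)

lemma madd_mneg_left[simp]: "f \<in> Hom K A B \<Longrightarrow> madd K A B (mneg A B f) f = mzero K A B"
  using hom.l_inv by (simp add: hom_group_simps mneg_def)

lemma madd_eq_self_imp_mzero:
  "f \<in> Hom K A B \<Longrightarrow> g \<in> Hom K A B \<Longrightarrow> madd K A B f g = f \<Longrightarrow> g = mzero K A B"
  using hom.l_cancel_one by (simp add: hom_group_simps)

end

lemma cmp_mzero_right[simp]:
  assumes "A \<in> Ob K" "B \<in> Ob K" "C \<in> Ob K" "g \<in> Hom K B C"
  shows "cmp K A B C g (mzero K A B) = mzero K A C"
proof -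
  let ?z = "cmp K A B C g (mzero K A B)"
  have "madd K A C ?z ?z = ?z"
    using cmp_madd_right[of A B C "mzero K A B" "mzero K A B" g] assms by simp
  then show ?thesis using madd_eq_self_imp_mzero[of A C ?z ?z] assms by simp
qed

lemma cmp_mzero_left[simp]:
  assumes "A \<in> Ob K" "B \<in> Ob K" "C \<in> Ob K" "f \<in> Hom K A B"
  shows "cmp K A B C (mzero K B C) f = mzero K A C"
proof -
  let ?z = "cmp K A B C (mzero K B C) f"
  have "madd K A C ?z ?z = ?z"
    using cmp_madd_left[of A B C f "mzero K B C" "mzero K B C"] assms by simp
  then show ?thesis using madd_eq_self_imp_mzero[of A C ?z ?z] assms by simp
qed

lemma ext_group_comm_group: "C \<in> Ob K \<Longrightarrow> A \<in> Ob K \<Longrightarrow> comm_group (ext_group K C A)"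
  using E_biadditive by (simp add: biadditive_E_def)

lemma epull_closed[simp]:
  "C' \<in> Ob K \<Longrightarrow> C \<in> Ob K \<Longrightarrow> A \<in> Ob K \<Longrightarrow> c \<in> Hom K C' C \<Longrightarrow> d \<in> Ext K C A \<Longrightarrow>
   epull K C' C A c d \<in> Ext K C' A"
  using E_biadditive by (simp add: biadditive_E_def)

lemma epush_idm[simp]:
  "C \<in> Ob K \<Longrightarrow> A \<in> Ob K \<Longrightarrow> d \<in> Ext K C A \<Longrightarrow> epush K C A A (idm K A) d = d"
  using E_biadditive by (simp add: biadditive_E_def)

lemma epull_idm[simp]:
  "C \<in> Ob K \<Longrightarrow> A \<in> Ob K \<Longrightarrow> d \<in> Ext K C A \<Longrightarrow> epull K C C A (idm K C) d = d"
  using E_biadditive by (simp add: biadditive_E_def)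

lemma epull_cmp:
  "C'' \<in> Ob K \<Longrightarrow> C' \<in> Ob K \<Longrightarrow> C \<in> Ob K \<Longrightarrow> A \<in> Ob K \<Longrightarrow> c \<in> Hom K C' C \<Longrightarrow>
   c' \<in> Hom K C'' C' \<Longrightarrow> d \<in> Ext K C A \<Longrightarrow>
   epull K C'' C' A c' (epull K C' C A c d) = epull K C'' C A (cmp K C'' C' C c c') d"
  using E_biadditive by (simp add: biadditive_E_def)

lemma epull_madd:
  "C' \<in> Ob K \<Longrightarrow> C \<in> Ob K \<Longrightarrow> A \<in> Ob K \<Longrightarrow> c \<in> Hom K C' C \<Longrightarrow> e \<in> Hom K C' C \<Longrightarrow>
   d \<in> Ext K C A \<Longrightarrow>
   epull K C' C A (madd K C' C c e) d = eadd K C' A (epull K C' C A c d) (epull K C' C A e d)"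
  using E_biadditive by (simp add: biadditive_E_def)

lemma eadd_eq_self_imp_ezero:
  assumes "C \<in> Ob K" "A \<in> Ob K" "f \<in> Ext K C A" "g \<in> Ext K C A" "eadd K C A f g = f"
  shows "g = ezero K C A"
proof -
  interpret ext: comm_group "ext_group K C A"
    using ext_group_comm_group assms by blast
  show ?thesis
    using ext.l_cancel_one assms by (simp add: ext_group_def)
qed

lemma epull_mzero:
  assumes "C' \<in> Ob K" "C \<in> Ob K" "A \<in> Ob K" "d \<in> Ext K C A"
  shows "epull K C' C A (mzero K C' C) d = ezero K C' A"
proof -
  let ?z = "epull K C' C A (mzero K C' C) d"
  have "eadd K C' A ?z ?z = ?z"
    using epull_madd[of C' C A "mzero K C' C" "mzero K C' C" d] assms by simp
  then show ?thesis using eadd_eq_self_imp_ezero[of C' A ?z ?z] assms by simp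
qed

lemma rlz_typed:
  "rlz K A B C x y d \<Longrightarrow>
   A \<in> Ob K \<and> B \<in> Ob K \<and> C \<in> Ob K \<and> x \<in> Hom K A B \<and> y \<in> Hom K B C \<and> d \<in> Ext K C A"
  using realization[unfolded realization_def, THEN conjunct1] by blast

lemma rlz_equiv_middle:
  "rlz K A B C x y d \<Longrightarrow> B' \<in> Ob K \<Longrightarrow> x' \<in> Hom K A B' \<Longrightarrow> y' \<in> Hom K B' C \<Longrightarrow>
   isom K B B' b \<Longrightarrow> cmp K A B B' b x = x' \<Longrightarrow> cmp K B B' C y' b = y \<Longrightarrow>
   rlz K A B' C x' y' d"
  using realization[unfolded realization_def, THEN conjunct2, THEN conjunct2, THEN conjunct1]
  unfolding seq_equiv_def by blast

lemma rlz_morphism: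
  "rlz K A B C x y d \<Longrightarrow> rlz K A' B' C' x' y' d' \<Longrightarrow> a \<in> Hom K A A' \<Longrightarrow> c \<in> Hom K C C' \<Longrightarrow>
   epush K C A A' a d = epull K C C' A' c d' \<Longrightarrow>
   \<exists>b\<in>Hom K B B'. cmp K A B B' b x = cmp K A A' B' x' a \<and> cmp K B B' C' y' b = cmp K B C C' c y"
  using realization[unfolded realization_def, THEN conjunct2, THEN conjunct2, THEN conjunct2] by blast

lemma rlz_biprod: "biprod K A C S i1 i2 p1 p2 \<Longrightarrow> rlz K A S C i1 p2 (ezero K C A)"
  using realization_additive unfolding additive_realization_def by blast

lemmas rlz_biprod_sum =
  realization_additive[unfolded additive_realization_def, THEN conjunct2, rule_format]

lemma ET3_rule:
  "rlz K A B C x y d \<Longrightarrow> rlz K A' B' C' x' y' d' \<Longrightarrow> a \<in> Hom K A A' \<Longrightarrow> b \<in> Hom K B B' \<Longrightarrow>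
   cmp K A B B' b x = cmp K A A' B' x' a \<Longrightarrow>
   \<exists>c\<in>Hom K C C'. cmp K B C C' c y = cmp K B B' C' y' b \<and> epush K C A A' a d = epull K C C' A' c d'"
  using ET3 unfolding ET3_def by blast

lemmas ET4_rule = ET4[unfolded ET4_def, rule_format, OF conjI]

lemma etri_octahedral:
  assumes "etri K A B D" "etri K B C F"
  shows "\<exists>E. etri K A C E \<and> etri K D E F"
  using assms ET4_rule unfolding etri_def by metis

lemma biprod_zero_right:
  assumes "Z \<in> Ob K" "idm K Z = mzero K Z Z" "A \<in> Ob K"
  shows "biprod K A Z A (idm K A) (mzero K Z A) (idm K A) (mzero K A Z)"
  using assms unfolding biprod_def by simp

lemma biprod_swap: "biprod K A C S i1 i2 p1 p2 \<Longrightarrow> biprod K C A S i2 i1 p2 p1"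
  unfolding biprod_def by (auto simp: madd_commute)

lemma isom_idm_plus_square_zero:
  assumes T: "T \<in> Ob K" and v: "v \<in> Hom K T T" and vv: "cmp K T T T v v = mzero K T T"
  shows "isom K T T (madd K T T (idm K T) v)"
proof -
  let ?c = "cmp K T T T" and ?a = "madd K T T" and ?z = "mzero K T T" and ?i = "idm K T"
  let ?w = "mneg T T v"
  let ?p = "?a ?i v" and ?q = "?a ?i ?w"
  have w: "?w \<in> Hom K T T" using T v by simp
  have "?c v (?a v ?w) = ?a (?c v v) (?c v ?w)" by (rule cmp_madd_right) (simp_all add: T v w)
  then have vw: "?c v ?w = ?z" using vv T v w by simp
  have "?c (?a v ?w) v = ?a (?c v v) (?c ?w v)" by (rule cmp_madd_left) (simp_all add: T v w)
  then have wv: "?c ?w v = ?z" using vv T v w by simp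
  have p: "?p \<in> Hom K T T" "?q \<in> Hom K T T" using T v w by simp_all
  have "?c ?p ?q = ?a (?c ?p ?i) (?c ?p ?w)" by (rule cmp_madd_right) (simp_all add: T w p)
  also have "\<dots> = ?a ?p (?a ?w (?c v ?w))" using cmp_madd_left[of T T T ?w ?i v] T v w p by simp
  also have "\<dots> = ?i" using vw T v w by (simp add: madd_assoc)
  finally have pq: "?c ?p ?q = ?i" .
  have "?c ?q ?p = ?a (?c ?q ?i) (?c ?q v)" by (rule cmp_madd_right) (simp_all add: T v p)
  also have "\<dots> = ?a ?q (?a v (?c ?w v))" using cmp_madd_left[of T T T v ?i ?w] T v w p by simp
  also have "\<dots> = ?i" using wv T v w by (simp add: madd_assoc)
  finally have qp: "?c ?q ?p = ?i" .
  show ?thesis unfolding isom_def using pq qp p by blast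
qed

lemma isom_if_composites_isom:
  assumes obs: "C \<in> Ob K" "C' \<in> Ob K" and c: "c \<in> Hom K C C'" "c' \<in> Hom K C' C"
    and "isom K C C (cmp K C C' C c' c)" and "isom K C' C' (cmp K C' C C' c c')"
  shows "isom K C C' c"
proof -
  obtain w where w: "w \<in> Hom K C C" "cmp K C C C w (cmp K C C' C c' c) = idm K C"
    using assms(5) unfolding isom_def by blast
  obtain w' where w': "w' \<in> Hom K C' C'" "cmp K C' C' C' (cmp K C' C C' c c') w' = idm K C'"
    using assms(6) unfolding isom_def by blast
  let ?l = "cmp K C' C C w c'" and ?r = "cmp K C' C' C c' w'"
  have l: "cmp K C C' C ?l c = idm K C" using w obs c by simp
  have r: "cmp K C' C C' c ?r = idm K C'" using w' obs c by simp
  have lr: "?l \<in> Hom K C' C" "?r \<in> Hom K C' C" using obs c w w' by simp_all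
  have "?l = cmp K C' C' C ?l (cmp K C' C C' c ?r)" using r lr obs by simp
  also have "\<dots> = cmp K C' C C (cmp K C C' C ?l c) ?r"
    by (rule cmp_assoc[symmetric]) (simp_all add: obs c lr)
  also have "\<dots> = ?r" using l lr obs by simp
  finally have "?l = ?r" .
  then show ?thesis unfolding isom_def using l r c lr by auto
qed

text \<open>The split conflation \<open>A \<rightarrow> A \<oplus> T \<rightarrow> T\<close> realizes \<open>g\<^sup>* d = 0\<close>, so the realization
  provides a morphism of conflations from it to \<open>A \<rightarrow> B \<rightarrow> C\<close> lying over \<open>g\<close>.\<close>

lemma rlz_lift_if_epull_ezero:
  assumes r: "rlz K A B C x y d" and T: "T \<in> Ob K" and g: "g \<in> Hom K T C"
    and gd: "epull K T C A g d = ezero K T A"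
  shows "\<exists>h\<in>Hom K T B. cmp K T B C y h = g"
proof -
  have D: "A \<in> Ob K" "B \<in> Ob K" "C \<in> Ob K" "y \<in> Hom K B C" "d \<in> Ext K C A"
    using rlz_typed[OF r] by auto
  obtain S i1 i2 p1 p2 where bp: "biprod K A T S i1 i2 p1 p2" using biprod_exists D T by blast
  have S: "S \<in> Ob K" "i2 \<in> Hom K T S" "p2 \<in> Hom K S T" "cmp K T S T p2 i2 = idm K T"
    using bp unfolding biprod_def by auto
  have split: "rlz K A S T i1 p2 (epull K T C A g d)" using rlz_biprod[OF bp] gd by simp
  obtain b where b: "b \<in> Hom K S B" "cmp K S B C y b = cmp K S T C g p2"
    using rlz_morphism[OF split r, of "idm K A" g] D T g by auto
  have "cmp K T B C y (cmp K T S B b i2) = cmp K T S C (cmp K S T C g p2) i2"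
    using b S D T by (metis cmp_assoc)
  then show ?thesis using b S D T g by (intro bexI[of _ "cmp K T S B b i2"]) auto
qed

text \<open>Writing \<open>u = 1 + v\<close>, the endomorphism \<open>v\<close> kills both \<open>y\<close> and \<open>d\<close>, so it factors
  through \<open>y\<close> and squares to zero.\<close>

lemma isom_if_fixes_deflation:
  assumes r: "rlz K A B C x y d" and u: "u \<in> Hom K C C"
    and uy: "cmp K B C C u y = y" and ud: "epull K C C A u d = d"
  shows "isom K C C u"
proof -
  have D: "A \<in> Ob K" "B \<in> Ob K" "C \<in> Ob K" "y \<in> Hom K B C" "d \<in> Ext K C A"
    using rlz_typed[OF r] by auto
  let ?i = "idm K C" and ?n = "mneg C C (idm K C)"
  let ?v = "madd K C C u ?n"
  have v: "?v \<in> Hom K C C" using u D by simp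
  have "eadd K C A d (epull K C C A ?n d) = epull K C C A (madd K C C ?i ?n) d"
    using epull_madd[of C C A ?i ?n d] D by simp
  also have "\<dots> = ezero K C A" using epull_mzero D by simp
  finally have "eadd K C A d (epull K C C A ?n d) = ezero K C A" .
  then have vd: "epull K C C A ?v d = ezero K C A"
    using epull_madd[of C C A u ?n d] u D ud by simp
  obtain h where h: "h \<in> Hom K C B" "cmp K C B C y h = ?v"
    using rlz_lift_if_epull_ezero[OF r D(3) v vd] by blast
  have "cmp K B C C ?v y = madd K B C y (cmp K B C C ?n y)"
    using cmp_madd_left[of B C C y u ?n] uy u D by simp
  also have "\<dots> = cmp K B C C (madd K C C ?i ?n) y"
    using cmp_madd_left[of B C C y ?i ?n] D by simp
  finally have vy: "cmp K B C C ?v y = mzero K B C" using D by simp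
  have "cmp K C C C ?v ?v = cmp K C B C (cmp K B C C ?v y) h"
    using h v D by simp
  then have vv: "cmp K C C C ?v ?v = mzero K C C" using vy h D by simp
  have "madd K C C ?i ?v = madd K C C u (madd K C C ?n ?i)"
    using madd_commute[of C C ?i ?v] madd_assoc v u D by simp
  then have "madd K C C ?i ?v = u" using u D by simp
  then show ?thesis using isom_idm_plus_square_zero[OF D(3) v vv] by simp
qed

lemma rlz_same_inflation_isom:
  assumes r: "rlz K A B C x y d" and r': "rlz K A B C' x y' d'"
  shows "\<exists>c. isom K C C' c"
proof -
  have D: "A \<in> Ob K" "B \<in> Ob K" "C \<in> Ob K" "x \<in> Hom K A B" "y \<in> Hom K B C" "d \<in> Ext K C A"
    using rlz_typed[OF r] by auto
  have D': "C' \<in> Ob K" "y' \<in> Hom K B C'" "d' \<in> Ext K C' A" using rlz_typed[OF r'] by auto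
  obtain c where c: "c \<in> Hom K C C'" "cmp K B C C' c y = y'" "epull K C C' A c d' = d"
    using ET3_rule[OF r r', of "idm K A" "idm K B"] D D' by auto
  obtain c' where c': "c' \<in> Hom K C' C" "cmp K B C' C c' y' = y" "epull K C' C A c' d = d'"
    using ET3_rule[OF r' r, of "idm K A" "idm K B"] D D' by auto
  have "isom K C C (cmp K C C' C c' c)"
    using isom_if_fixes_deflation[OF r] epull_cmp[of C C' C A c' c d, symmetric] c c' D D'
    by simp
  moreover have "isom K C' C' (cmp K C' C C' c c')"
    using isom_if_fixes_deflation[OF r'] epull_cmp[of C' C C' A c c' d', symmetric] c c' D D'
    by simp
  ultimately show ?thesis using isom_if_composites_isom D D' c c' by blast
qed

lemma etri_isom_middle:
  assumes "etri K A B C" "B' \<in> Ob K" "isom K B B' b"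
  shows "etri K A B' C"
proof -
  obtain x y d where r: "rlz K A B C x y d" using assms(1) unfolding etri_def by blast
  have D: "A \<in> Ob K" "B \<in> Ob K" "C \<in> Ob K" "x \<in> Hom K A B" "y \<in> Hom K B C"
    using rlz_typed[OF r] by auto
  obtain g where g: "g \<in> Hom K B' B" "cmp K B B' B g b = idm K B" "b \<in> Hom K B B'"
    using assms(3) unfolding isom_def by blast
  have "cmp K B B' C (cmp K B' B C y g) b = y" using g D assms(2) by simp
  then have "rlz K A B' C (cmp K A B B' b x) (cmp K B' B C y g) d"
    using rlz_equiv_middle[OF r assms(2) _ _ assms(3)] g D assms(2) by simp
  then show ?thesis unfolding etri_def by blast
qed

text \<open>The automorphism \<open>1 + t\<^sub>b x p\<^sub>a\<close> of \<open>A \<oplus> D\<close> carries the split inflation \<open>t\<^sub>a\<close>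
  to \<open>t\<^sub>a + t\<^sub>b x\<close>.\<close>

lemma rlz_graph_split:
  assumes bp: "biprod K A D T ta tb pa pb" and x: "x \<in> Hom K A D"
  shows "\<exists>y. rlz K A T D (madd K A T ta (cmp K A D T tb x)) y (ezero K D A)"
proof -
  have B: "A \<in> Ob K" "D \<in> Ob K" "T \<in> Ob K" "ta \<in> Hom K A T" "tb \<in> Hom K D T"
    "pa \<in> Hom K T A" "pb \<in> Hom K T D" "cmp K D T A pa tb = mzero K D A"
    "cmp K A T A pa ta = idm K A"
    using bp unfolding biprod_def by auto
  let ?n = "cmp K T D T tb (cmp K T A D x pa)"
  have n: "?n \<in> Hom K T T" using B x by simp
  have "cmp K T T A pa ?n = mzero K T A"
    using cmp_assoc_subst[of D T A T "cmp K T A D x pa" tb pa] B x by simp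
  then have "cmp K T T T ?n ?n = mzero K T T"
    using B x n by simp
  then have iso: "isom K T T (madd K T T (idm K T) ?n)"
    using isom_idm_plus_square_zero[OF B(3) n] by blast
  then obtain q where q: "q \<in> Hom K T T" "cmp K T T T q (madd K T T (idm K T) ?n) = idm K T"
    unfolding isom_def by blast
  have "cmp K A T T (madd K T T (idm K T) ?n) ta = madd K A T ta (cmp K A D T tb x)"
    using cmp_madd_left[of A T T ta "idm K T" ?n] B x n by simp
  then have "rlz K A T D (madd K A T ta (cmp K A D T tb x)) (cmp K T T D pb q) (ezero K D A)"
    using rlz_equiv_middle[OF rlz_biprod[OF bp] B(3) _ _ iso] B x q n by simp
  then show ?thesis by blast
qed

text \<open>The inflation \<open>(x\<^sub>1, x\<^sub>2) : A \<rightarrow> B\<^sub>1 \<oplus> B\<^sub>2\<close> factors as \<open>(1, x\<^sub>2) : A \<rightarrow> A \<oplus> B\<^sub>2\<close>, a split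
  inflation with cone \<open>B\<^sub>2\<close>, followed by \<open>x\<^sub>1 \<oplus> 1\<close>, an inflation with cone \<open>C\<^sub>1\<close>;
  (ET4) applied to this factorisation yields the conflation \<open>B\<^sub>2 \<rightarrow> M \<rightarrow> C\<^sub>1\<close>.\<close>

lemma rlz_pair_inflation:
  assumes r1: "rlz K A B1 C1 x1 y1 d1" and x2: "x2 \<in> Hom K A B2"
    and bp: "biprod K B1 B2 S i1 i2 p1 p2"
  shows "\<exists>M y d. rlz K A S M (madd K A S (cmp K A B1 S i1 x1) (cmp K A B2 S i2 x2)) y d
                 \<and> etri K B2 M C1"
proof -
  have D: "A \<in> Ob K" "B1 \<in> Ob K" "C1 \<in> Ob K" "x1 \<in> Hom K A B1"
    using rlz_typed[OF r1] by auto
  have B: "B2 \<in> Ob K" "S \<in> Ob K" "i1 \<in> Hom K B1 S" "i2 \<in> Hom K B2 S"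
    using bp unfolding biprod_def by auto
  obtain Z where Z: "Z \<in> Ob K" "idm K Z = mzero K Z Z" using zero_object_exists by blast
  obtain T ta tb pa pb where bT: "biprod K A B2 T ta tb pa pb" using biprod_exists D B by blast
  have T: "T \<in> Ob K" "ta \<in> Hom K A T" "tb \<in> Hom K B2 T" "pa \<in> Hom K T A" "pb \<in> Hom K T B2"
    "cmp K A T A pa ta = idm K A" "cmp K B2 T B2 pb tb = idm K B2"
    "cmp K B2 T A pa tb = mzero K B2 A" "cmp K A T B2 pb ta = mzero K A B2"
    using bT unfolding biprod_def by auto
  let ?j = "madd K A T ta (cmp K A B2 T tb x2)"
  obtain y where graph: "rlz K A T B2 ?j y (ezero K B2 A)" using rlz_graph_split[OF bT x2] by blast
  let ?s = "madd K T S (cmp K T A S (cmp K A B1 S i1 x1) pa)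
                       (cmp K T B2 S (cmp K B2 B2 S i2 (idm K B2)) pb)"
  have "\<exists>\<tau> e. rlz K T S C1 ?s \<tau> e"
    using rlz_biprod_sum[of A B1 C1 x1 y1 d1 B2 B2 Z "idm K B2" "mzero K B2 Z" "ezero K Z B2"
        T ta tb pa pb S i1 i2 p1 p2 C1 "idm K C1" "mzero K Z C1" "idm K C1" "mzero K C1 Z"]
      r1 rlz_biprod[OF biprod_zero_right[OF Z B(1)]] bT bp biprod_zero_right[OF Z D(3)]
    by blast
  then obtain \<tau> e where sum: "rlz K T S C1 ?s \<tau> e" by blast
  have "cmp K A T A pa (cmp K A B2 T tb x2) = mzero K A A"
    using cmp_assoc_subst[of B2 T A A x2 tb pa] T D B x2 by simp
  moreover have "cmp K A T B2 pb (cmp K A B2 T tb x2) = x2"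
    using cmp_assoc_subst[of B2 T B2 A x2 tb pb] T D B x2 by simp
  ultimately have "cmp K A T S ?s ?j = madd K A S (cmp K A B1 S i1 x1) (cmp K A B2 S i2 x2)"
    using D B T x2 by (simp add: cmp_madd_right cmp_madd_left)
  then show ?thesis
    using ET4_rule[OF graph sum] unfolding etri_def by auto
qed

lemma etri_pushout:
  assumes "etri K A B1 C1" "etri K A B2 C2"
  shows "\<exists>M. etri K B2 M C1 \<and> etri K B1 M C2"
proof -
  obtain x1 y1 d1 x2 y2 d2 where r: "rlz K A B1 C1 x1 y1 d1" "rlz K A B2 C2 x2 y2 d2"
    using assms unfolding etri_def by blast
  have D: "A \<in> Ob K" "B1 \<in> Ob K" "x1 \<in> Hom K A B1" "B2 \<in> Ob K" "x2 \<in> Hom K A B2"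
    using rlz_typed[OF r(1)] rlz_typed[OF r(2)] by auto
  obtain S i1 i2 p1 p2 where bp: "biprod K B1 B2 S i1 i2 p1 p2" using biprod_exists D by blast
  have S: "S \<in> Ob K" "i1 \<in> Hom K B1 S" "i2 \<in> Hom K B2 S" using bp unfolding biprod_def by auto
  let ?x = "madd K A S (cmp K A B1 S i1 x1) (cmp K A B2 S i2 x2)"
  obtain M y d where M: "rlz K A S M ?x y d" "etri K B2 M C1"
    using rlz_pair_inflation[OF r(1) D(5) bp] by blast
  obtain M' y' d' where M': "rlz K A S M' ?x y' d'" "etri K B1 M' C2"
    using rlz_pair_inflation[OF r(2) D(3) biprod_swap[OF bp]] madd_commute D S by auto
  obtain f where "isom K M' M f" using rlz_same_inflation_isom[OF M'(1) M(1)] by blast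
  then have "etri K B1 M C2" using etri_isom_middle[OF M'(2)] rlz_typed[OF M(1)] by blast
  then show ?thesis using M(2) by blast
qed

lemma extension_closed_pushout:
  assumes "extension_closed K X" "etri K A X0 C" "X0 \<in> X" "etri K A E Y" "Y \<in> X"
  shows "\<exists>M\<in>X. etri K E M C"
  using etri_pushout[OF assms(2,4)] assms(1,3,5) unfolding extension_closed_def by blast

end

lemma hatX_0[simp]: "hatX K X 0 = X"
  unfolding hatX_def by auto

lemma hatX_Suc_iff:
  "C \<in> hatX K X (Suc m) \<longleftrightarrow> (\<exists>L X0. X0 \<in> X \<and> etri K L X0 C \<and> L \<in> hatX K X m)"
proof
  assume "C \<in> hatX K X (Suc m)"
  then obtain Kk Xs where "Kk 0 = C" "\<forall>i<Suc m. Xs i \<in> X \<and> etri K (Kk (Suc i)) (Xs i) (Kk i)"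
    "Kk (Suc m) \<in> X"
    unfolding hatX_def by blast
  moreover have "Kk 1 \<in> hatX K X m"
    unfolding hatX_def mem_Collect_eq
    by (rule exI[of _ "Kk \<circ> Suc"], rule exI[of _ "Xs \<circ> Suc"]) (use calculation in auto)
  ultimately show "\<exists>L X0. X0 \<in> X \<and> etri K L X0 C \<and> L \<in> hatX K X m"
    by (metis One_nat_def zero_less_Suc)
next
  assume "\<exists>L X0. X0 \<in> X \<and> etri K L X0 C \<and> L \<in> hatX K X m"
  then obtain L X0 Kk Xs where chain: "X0 \<in> X" "etri K L X0 C" "Kk 0 = L"
    "\<forall>i<m. Xs i \<in> X \<and> etri K (Kk (Suc i)) (Xs i) (Kk i)" "Kk m \<in> X"
    unfolding hatX_def by blast
  show "C \<in> hatX K X (Suc m)"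
    unfolding hatX_def mem_Collect_eq
    by (rule exI[of _ "case_nat C Kk"], rule exI[of _ "case_nat X0 Xs"])
      (use chain in \<open>auto split: nat.split\<close>)
qed

lemma hatX_mono: "X \<subseteq> Y \<Longrightarrow> hatX K X m \<subseteq> hatX K Y m"
  unfolding hatX_def by blast

text \<open>The chains in the theorem are indexed from \<open>1\<close> and end in \<open>K\<^sub>m\<^sub>+\<^sub>1 = W\<^sub>m\<^sub>+\<^sub>1\<close>;
  those of \<open>hatX\<close> are indexed from \<open>0\<close> and end in \<open>K\<^sub>m \<in> W\<close>.\<close>

lemma hatX_iff_shifted_chain:
  "L \<in> hatX K W m \<longleftrightarrow>
   (\<exists>Kk Ws. Kk 1 = L \<and> (\<forall>i\<in>{1..Suc m}. Ws i \<in> W) \<and>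
      (\<forall>i\<in>{1..m}. etri K (Kk (Suc i)) (Ws i) (Kk i)) \<and> Kk (Suc m) = Ws (Suc m))"
proof
  assume "L \<in> hatX K W m"
  then obtain Kk Xs where chain: "Kk 0 = L" "\<forall>i<m. Xs i \<in> W \<and> etri K (Kk (Suc i)) (Xs i) (Kk i)"
    "Kk m \<in> W"
    unfolding hatX_def by blast
  have step: "etri K (Kk i) (Xs (i - 1)) (Kk (i - 1))" if "i \<in> {1..m}" for i
    using chain(2)[rule_format, of "i - 1"] that by auto
  show "\<exists>Kk Ws. Kk 1 = L \<and> (\<forall>i\<in>{1..Suc m}. Ws i \<in> W) \<and>
      (\<forall>i\<in>{1..m}. etri K (Kk (Suc i)) (Ws i) (Kk i)) \<and> Kk (Suc m) = Ws (Suc m)"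
    by (rule exI[of _ "\<lambda>i. Kk (i - 1)"], rule exI[of _ "\<lambda>i. if i \<le> m then Xs (i - 1) else Kk m"])
      (use chain step in \<open>auto simp: le_Suc_eq\<close>)
next
  assume "\<exists>Kk Ws. Kk 1 = L \<and> (\<forall>i\<in>{1..Suc m}. Ws i \<in> W) \<and>
      (\<forall>i\<in>{1..m}. etri K (Kk (Suc i)) (Ws i) (Kk i)) \<and> Kk (Suc m) = Ws (Suc m)"
  then obtain Kk Ws where chain: "Kk 1 = L" "\<forall>i\<in>{1..Suc m}. Ws i \<in> W"
    "\<forall>i\<in>{1..m}. etri K (Kk (Suc i)) (Ws i) (Kk i)" "Kk (Suc m) = Ws (Suc m)"
    by blast
  show "L \<in> hatX K W m"
    unfolding hatX_def mem_Collect_eq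
    by (rule exI[of _ "Kk \<circ> Suc"], rule exI[of _ "Ws \<circ> Suc"]) (use chain in auto)
qed

lemma (in extriangulated_category) hatX_Suc_cogenerator_resolution:
  assumes ec: "extension_closed K X" and cg: "cogenerator K W X"
  shows "C \<in> hatX K X (Suc m) \<Longrightarrow> \<exists>L X0. X0 \<in> X \<and> etri K L X0 C \<and> L \<in> hatX K W m"
proof (induction m arbitrary: C)
  case 0
  then obtain K1 X0 where X0: "X0 \<in> X" "etri K K1 X0 C" "K1 \<in> X"
    unfolding hatX_Suc_iff[of C] hatX_0 by blast
  then obtain V Y where V: "V \<in> W" "Y \<in> X" "etri K K1 V Y"
    using cg unfolding cogenerator_def by blast
  then obtain M where "M \<in> X" "etri K V M C"
    using extension_closed_pushout[OF ec X0(2,1) V(3,2)] by blast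
  then show ?case using V(1) by auto
next
  case (Suc m)
  then obtain K1 X0 where X0: "X0 \<in> X" "etri K K1 X0 C" "K1 \<in> hatX K X (Suc m)"
    unfolding hatX_Suc_iff[of C] by blast
  then obtain L Y where Y: "Y \<in> X" "etri K L Y K1" "L \<in> hatX K W m"
    using Suc.IH by blast
  then obtain V Y' where V: "V \<in> W" "Y' \<in> X" "etri K Y V Y'"
    using cg unfolding cogenerator_def by blast
  then obtain E where E: "etri K L V E" "etri K K1 E Y'"
    using etri_octahedral Y(2) by blast
  then obtain M where "M \<in> X" "etri K E M C"
    using extension_closed_pushout[OF ec X0(2,1) E(2) V(2)] by blast
  moreover have "E \<in> hatX K W (Suc m)"
    unfolding hatX_Suc_iff[of E] using E(1) V(1) Y(3) by blast
  ultimately show ?case by blast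
qed

theorem lemma3p6:
  fixes K :: "('o,'m,'e) extri" and X W :: "'o set" and n :: nat and C :: 'o
  assumes "extriangulated K" and "enough_projectives K" and "enough_injectives K"
    and "subcat K X" and "subcat K W"
    and "extension_closed K X" and "cogenerator K W X"
    and "n \<ge> 1" and "C \<in> Ob K"
  shows "C \<in> hatX K X n \<longleftrightarrow>
    (\<exists>X0 (Kk :: nat \<Rightarrow> 'o) (Ws :: nat \<Rightarrow> 'o).
       X0 \<in> X \<and> (\<forall>i\<in>{1..n}. Ws i \<in> W) \<and>
       etri K (Kk 1) X0 C \<and>
       (\<forall>i\<in>{1..n-1}. etri K (Kk (Suc i)) (Ws i) (Kk i)) \<and>
       Kk n = Ws n)"
proof -
  interpret extriangulated_category K by unfold_locales (rule assms(1))
  obtain m where n: "n = Suc m" using assms(8) by (cases n) auto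
  have WX: "W \<subseteq> X" using assms(7) unfolding cogenerator_def by blast
  have "C \<in> hatX K X n \<longleftrightarrow> (\<exists>L X0. X0 \<in> X \<and> etri K L X0 C \<and> L \<in> hatX K W m)"
  proof
    assume "C \<in> hatX K X n"
    then show "\<exists>L X0. X0 \<in> X \<and> etri K L X0 C \<and> L \<in> hatX K W m"
      unfolding n by (rule hatX_Suc_cogenerator_resolution[OF assms(6,7)])
  next
    assume "\<exists>L X0. X0 \<in> X \<and> etri K L X0 C \<and> L \<in> hatX K W m"
    then obtain L X0 where "X0 \<in> X" "etri K L X0 C" "L \<in> hatX K X m"
      using hatX_mono[OF WX] by blast
    then show "C \<in> hatX K X n"
      unfolding n hatX_Suc_iff by blast
  qed
  then show ?thesis
    unfolding hatX_iff_shifted_chain n diff_Suc_1 by blast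
qed

end
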